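(* Let $F_n$ be a probability distribution function on $\mathbb{R}$, $X\sim F_n$, with $\varepsilon_n:=F_n(0)>0$, $\mathbb{E}_{F_n}[X]\ge\mu>0$, $\mathbb{E}_{F_n}[X^2]\le C$ and $\mathbb{E}_{F_n}[X^2\mid X\le0]\le K$. Let $G_n(y)=\int_{-\infty}^{y}(x^2-yx)\,dF_n(x)$, let $y_n^*\ge0$ satisfy $G_n(y_n^* )=0$, let $D=C/\mu$, and let $$R_n=\mathbb{E}_{F_n}[X^2;\,X\le0]+y_n^*\,\mathbb{E}_{F_n}[|X|;\,X\le0].$$ Then $R_n\le(K+D\sqrt K)\,\varepsilon_n$.
   Context: $\mathbb{E}_{F_n}[Y;\,A]$ denotes $\mathbb{E}_{F_n}[Y\mathbf{1}_A]$. *)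

theory Defs
  imports "HOL-Probability.Probability"
begin

text \<open>The distribution F_n is represented by a probability measure M on the Borel sets of
the reals; X is the identity random variable, so F_n(t) = measure M {..t}.\<close>

definition G :: "real measure \<Rightarrow> real \<Rightarrow> real" where
  "G M y = (LINT x:{..y}|M. x\<^sup>2 - y * x)"

end

theory Submission
  imports Defs
begin

(* The first term of R_n is at most K eps_n by the hypothesis on the conditional second
   moment. For the second, integrating y x <= x^2 - 1{x <= y} (x^2 - y x) and using G(y_star) = 0
   gives y_star E[X] <= E[X^2], hence y_star <= C/mu = D; and Cauchy-Schwarz on {X <= 0} gives
   E[|X|; X <= 0] <= sqrt(E[X^2; X <= 0] eps_n) <= sqrt K eps_n. *)

lemma set_integral_square_le:
  fixes f :: "'a \<Rightarrow> real"
  assumes A: "A \<in> sets M" and pos: "measure M A > 0"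
    and f: "set_integrable M A f" and f2: "set_integrable M A (\<lambda>x. (f x)\<^sup>2)"
  shows "(LINT x:A|M. f x)\<^sup>2 \<le> measure M A * (LINT x:A|M. (f x)\<^sup>2)"
proof -
  define m where "m = measure M A"
  define t where "t = (LINT x:A|M. f x) / m"
  have fin: "emeasure M A \<noteq> \<infinity>"
    using pos by (auto simp: measure_def)
  have const: "set_integrable M A (\<lambda>_. t\<^sup>2)"
    using A fin by (simp add: set_integrable_def less_top)
  have expand: "(f x - t)\<^sup>2 = ((f x)\<^sup>2 - 2 * t * f x) + t\<^sup>2" for x
    by (simp add: power2_eq_square algebra_simps)
  have "0 \<le> (LINT x:A|M. (f x - t)\<^sup>2)"
    unfolding set_lebesgue_integral_def by (rule integral_nonneg_AE) auto
  also have "\<dots> = (LINT x:A|M. (f x)\<^sup>2) - 2 * t * (LINT x:A|M. f x) + t\<^sup>2 * m"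
    unfolding expand using f f2 const A fin
    by (simp add: set_integral_add set_integral_diff set_integral_const m_def)
  finally show ?thesis
    using pos by (simp add: t_def m_def power2_eq_square field_simps)
qed

lemma set_integral_abs_le_sqrt_mult_measure:
  fixes f :: "'a \<Rightarrow> real"
  assumes A: "A \<in> sets M" and pos: "measure M A > 0"
    and f: "set_integrable M A f" and f2: "set_integrable M A (\<lambda>x. (f x)\<^sup>2)"
    and K: "(LINT x:A|M. (f x)\<^sup>2) / measure M A \<le> K"
  shows "(LINT x:A|M. \<bar>f x\<bar>) \<le> sqrt K * measure M A"
proof -
  define m where "m = measure M A"
  have f2_le: "(LINT x:A|M. (f x)\<^sup>2) \<le> K * m"
    using K pos by (simp add: m_def field_simps)
  have "0 \<le> (LINT x:A|M. (f x)\<^sup>2)"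
    unfolding set_lebesgue_integral_def by (rule integral_nonneg_AE) auto
  then have "0 \<le> K"
    using f2_le pos unfolding m_def by (metis order.trans zero_le_mult_iff not_less)
  have "(LINT x:A|M. \<bar>f x\<bar>)\<^sup>2 \<le> m * (LINT x:A|M. \<bar>f x\<bar>\<^sup>2)"
    unfolding m_def using f f2
    by (intro set_integral_square_le[OF A pos]) (simp_all add: set_integrable_abs)
  also have "\<dots> \<le> m * (K * m)"
    using f2_le pos by (simp add: m_def)
  also have "\<dots> = (sqrt K * m)\<^sup>2"
    using \<open>0 \<le> K\<close> by (simp add: power_mult_distrib power2_eq_square[of m])
  finally show ?thesis
    unfolding m_def by (rule power2_le_imp_le) (use pos \<open>0 \<le> K\<close> in simp)
qed

lemma G_eq_0_imp_mult_mean_le_second_moment: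
  fixes M :: "real measure"
  assumes "sets M = sets borel"
    and X: "integrable M (\<lambda>x. x)" and X2: "integrable M (\<lambda>x. x\<^sup>2)"
    and "y \<ge> 0" and "G M y = 0"
  shows "y * (LINT x|M. x) \<le> (LINT x|M. x\<^sup>2)"
proof -
  have Gy: "integrable M (\<lambda>x. indicator {..y} x *\<^sub>R (x\<^sup>2 - y * x))"
    using assms X X2 by (intro integrable_mult_indicator) auto
  have "y * x \<le> x\<^sup>2 - indicator {..y} x *\<^sub>R (x\<^sup>2 - y * x)" for x
  proof (cases "x \<le> y")
    case False
    then have "y * x \<le> x * x"
      using \<open>y \<ge> 0\<close> by (intro mult_right_mono) auto
    then show ?thesis
      using False by (simp add: power2_eq_square)
  qed simp
  then have "(LINT x|M. y * x) \<le> (LINT x|M. x\<^sup>2 - indicator {..y} x *\<^sub>R (x\<^sup>2 - y * x))"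
    using X X2 Gy by (intro integral_mono) auto
  also have "\<dots> = (LINT x|M. x\<^sup>2) - G M y"
    using X2 Gy by (simp add: G_def set_lebesgue_integral_def)
  finally show ?thesis
    using \<open>G M y = 0\<close> by simp
qed

theorem lemma8:
  fixes M :: "real measure" and \<mu> C K y_star :: real
  assumes "prob_space M"
    and "sets M = sets borel"
    and "integrable M (\<lambda>x. x\<^sup>2)"
    and "integrable M (\<lambda>x. x)"
    and "measure M {..0} > 0"
    and "\<mu> > 0"
    and "(LINT x|M. x) \<ge> \<mu>"
    and "(LINT x|M. x\<^sup>2) \<le> C"
    and "(LINT x:{..0}|M. x\<^sup>2) / measure M {..0} \<le> K"
    and "y_star \<ge> 0"
    and "G M y_star = 0"
  shows "(LINT x:{..0}|M. x\<^sup>2) + y_star * (LINT x:{..0}|M. \<bar>x\<bar>)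
           \<le> (K + (C / \<mu>) * sqrt K) * measure M {..0}"
proof -
  have "y_star * \<mu> \<le> y_star * (LINT x|M. x)"
    using assms(7,10) by (intro mult_left_mono)
  also have "\<dots> \<le> C"
    using G_eq_0_imp_mult_mean_le_second_moment[OF assms(2,4,3,10,11)] assms(8) by linarith
  finally have y_star_le: "y_star \<le> C / \<mu>"
    using assms(6) by (simp add: field_simps)
  have nonpos: "{..0} \<in> sets M"
    using assms(2) by simp
  have X_int: "set_integrable M {..0} (\<lambda>x. x)"
    unfolding set_integrable_def using nonpos assms(4) by (rule integrable_mult_indicator)
  have X2_int: "set_integrable M {..0} (\<lambda>x. x\<^sup>2)"
    unfolding set_integrable_def using nonpos assms(3) by (rule integrable_mult_indicator)
  have "0 \<le> (LINT x:{..0}|M. \<bar>x\<bar>)"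
    unfolding set_lebesgue_integral_def by (rule integral_nonneg_AE) simp
  moreover have "(LINT x:{..0}|M. \<bar>x\<bar>) \<le> sqrt K * measure M {..0}"
    by (rule set_integral_abs_le_sqrt_mult_measure[OF nonpos assms(5) X_int X2_int assms(9)])
  ultimately have "y_star * (LINT x:{..0}|M. \<bar>x\<bar>) \<le> (C / \<mu>) * (sqrt K * measure M {..0})"
    using y_star_le assms(10) by (intro mult_mono) auto
  moreover have "(LINT x:{..0}|M. x\<^sup>2) \<le> K * measure M {..0}"
    using assms(5,9) by (simp add: field_simps)
  ultimately show ?thesis
    by (simp add: algebra_simps)
qed

end
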